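(* Under the setting of Theorem 2, let $d_{\min}=\min_{1\le s<j\le r+1}(\lambda_s-\lambda_j)$. Then: if $(i_1,\dots,i_r)=(1,\dots,r)$, $\lambda_{\min}(\mathrm{hess}\,g(\mathbf{X}_\Omega))\ge\tfrac12 d_{\min}$; if $\{i_1,\dots,i_r\}=\{1,\dots,r\}$ but $(i_1,\dots,i_r)\ne(1,\dots,r)$, $\lambda_{\min}(\mathrm{hess}\,g(\mathbf{X}_\Omega))\le-\tfrac12 d_{\min}$; if $\{i_1,\dots,i_r\}\ne\{1,\dots,r\}$, $\lambda_{\min}(\mathrm{hess}\,g(\mathbf{X}_\Omega))\le-d_{\min}$.
   Context: $\mathbf{M}\in\mathbb{R}^{N\times N}$ symmetric with eigenvalues $\lambda_1>\cdots>\lambda_r>\lambda_{r+1}\ge\cdots\ge\lambda_N$ and orthonormal eigenvectors $\bm{x}_1,\dots,\bm{x}_N$; for distinct $i_1,\dots,i_r\in[N]$, $\mathbf{X}_\Omega=[\bm{x}_{i_1},\dots,\bm{x}_{i_r}]$. $\mathrm{St}(N,r)=\{\mathbf{X}:\mathbf{X}^\top\mathbf{X}=\mathbf{I}_r\}$, $\mathbf{N}=\mathrm{diag}(r,r-1,\dots,1)$, $g(\mathbf{X})=-\tfrac12\mathrm{tr}(\mathbf{X}^\top\mathbf{M}\mathbf{X}\mathbf{N})$. $\mathcal{T}_{\mathbf{X}}\mathrm{St}(N,r)=\{\mathbf{U}:\mathbf{X}^\top\mathbf{U}+\mathbf{U}^\top\mathbf{X}=\mathbf{0}\}$; $\mathrm{hess}\,g(\mathbf{X})[\mathbf{U},\mathbf{U}]=\langle\mathbf{X}^\top\mathbf{M}\mathbf{X},\mathbf{U}^\top\mathbf{U}\mathbf{N}\rangle-\langle\mathbf{M},\mathbf{U}\mathbf{N}\mathbf{U}^\top\rangle$,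 and $\lambda_{\min}(\mathrm{hess}\,g(\mathbf{X}))=\min\{\mathrm{hess}\,g(\mathbf{X})[\mathbf{U},\mathbf{U}]:\mathbf{U}\in\mathcal{T}_{\mathbf{X}}\mathrm{St}(N,r),\|\mathbf{U}\|_F=1\}$. *)

theory Defs
  imports "Jordan_Normal_Form.Matrix"
begin

text \<open>Matrices are Jordan_Normal_Form matrices (real mat); all indices are 0-based:
  paper index k (1..N) corresponds to index k-1 here.\<close>

definition mtrace :: "real mat \<Rightarrow> real" where
  "mtrace A = (\<Sum>i<dim_row A. A $$ (i,i))"

definition frob_inner :: "real mat \<Rightarrow> real mat \<Rightarrow> real" where
  "frob_inner A B = mtrace (transpose_mat A * B)"

definition Nmat :: "nat \<Rightarrow> real mat" where
  "Nmat r = mat r r (\<lambda>(i,j). if i = j then real (r - i) else 0)"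

definition tangent_St :: "nat \<Rightarrow> nat \<Rightarrow> real mat \<Rightarrow> real mat set" where
  "tangent_St n r X = {U. U \<in> carrier_mat n r \<and>
      transpose_mat X * U + transpose_mat U * X = 0\<^sub>m r r}"

definition hess_g :: "real mat \<Rightarrow> nat \<Rightarrow> real mat \<Rightarrow> real mat \<Rightarrow> real" where
  "hess_g M r X U = frob_inner (transpose_mat X * M * X) (transpose_mat U * U * Nmat r)
                    - frob_inner M (U * Nmat r * transpose_mat U)"

text \<open>Smallest eigenvalue of the Riemannian Hessian: minimum of the quadratic form
  over unit-Frobenius-norm tangent vectors.\<close>
definition lambda_min_hess :: "real mat \<Rightarrow> nat \<Rightarrow> nat \<Rightarrow> real mat \<Rightarrow> real" where
  "lambda_min_hess M n r X =
     Inf {hess_g M r X U | U. U \<in> tangent_St n r X \<and> frob_inner U U = 1}"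

definition X_Omega :: "nat \<Rightarrow> nat \<Rightarrow> (nat \<Rightarrow> real vec) \<Rightarrow> (nat \<Rightarrow> nat) \<Rightarrow> real mat" where
  "X_Omega n r x idx = mat n r (\<lambda>(a,b). x (idx b) $ a)"

text \<open>d_min = min over 1 <= s < j <= r+1 of (lambda_s - lambda_j); 0-based: s < j <= r.\<close>
definition d_min :: "(nat \<Rightarrow> real) \<Rightarrow> nat \<Rightarrow> real" where
  "d_min lam r = Min {lam s - lam j | s j. s < j \<and> j \<le> r}"

end

theory Submission
  imports Defs "Jordan_Normal_Form.Determinant"
begin

text \<open>Conjugating by the orthogonal eigenvector matrix turns \<open>M\<close> into \<open>diag(\<lambda>)\<close> and
  \<open>X\<^sub>\<Omega>\<close> into the selection matrix of the columns \<open>i\<^sub>1, \<dots>, i\<^sub>r\<close>, without changing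
  the Hessian spectrum. In these coordinates a tangent vector \<open>V\<close> satisfies
  \<open>V(i\<^sub>a, b) = -V(i\<^sub>b, a)\<close>, and the Hessian form is the sum of
  \<open>N(b,b) (\<lambda>(i\<^sub>b) - \<lambda>(k)) V(k,b)\<^sup>2\<close>. For \<open>\<Omega> = (1, \<dots>, r)\<close>, pairing the entries \<open>(k,b)\<close>
  and \<open>(b,k)\<close> of the top \<open>r \<times> r\<close> block gives the weight \<open>(k - b)(\<lambda>(b) - \<lambda>(k))/2 \<ge> d\<^sub>m\<^sub>i\<^sub>n/2\<close>,
  and the rows below it have weights \<open>\<ge> d\<^sub>m\<^sub>i\<^sub>n\<close>. Otherwise a negative direction is a skew pair
  of entries at an inversion \<open>i < j\<close>, \<open>i\<^sub>j < i\<^sub>i\<close> of \<open>\<Omega>\<close>, or a single entry in a row among the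
  first \<open>r\<close> that \<open>\<Omega>\<close> misses and a column \<open>j\<close> whose index \<open>i\<^sub>j\<close> lies beyond the first \<open>r\<close>.\<close>

lemma mtrace_mult_comm:
  assumes A: "A \<in> carrier_mat m k" and B: "B \<in> carrier_mat k m"
  shows "mtrace (A * B) = mtrace (B * A)"
proof -
  have "mtrace (A * B) = (\<Sum>i<m. \<Sum>j<k. A $$ (i,j) * B $$ (j,i))"
    using A B by (simp add: mtrace_def scalar_prod_def atLeast0LessThan)
  also have "\<dots> = (\<Sum>j<k. \<Sum>i<m. B $$ (j,i) * A $$ (i,j))"
    by (subst sum.swap) (simp add: mult.commute)
  also have "\<dots> = mtrace (B * A)"
    using A B by (simp add: mtrace_def scalar_prod_def atLeast0LessThan)
  finally show ?thesis .
qed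

lemma frob_inner_eq_sum:
  assumes "A \<in> carrier_mat m k" and "B \<in> carrier_mat m k"
  shows "frob_inner A B = (\<Sum>i<m. \<Sum>j<k. A $$ (i,j) * B $$ (i,j))"
proof -
  have "frob_inner A B = (\<Sum>j<k. \<Sum>i<m. A $$ (i,j) * B $$ (i,j))"
    using assms by (simp add: frob_inner_def mtrace_def scalar_prod_def atLeast0LessThan)
  then show ?thesis by (simp add: sum.swap[of _ "{..<k}"])
qed

lemma frob_inner_self_eq_sum:
  "A \<in> carrier_mat m k \<Longrightarrow> frob_inner A A = (\<Sum>i<m. \<Sum>j<k. (A $$ (i,j))\<^sup>2)"
  by (simp add: frob_inner_eq_sum power2_eq_square)

lemma frob_inner_mat_diag:
  assumes A: "A \<in> carrier_mat m m"
  shows "frob_inner (mat_diag m f) A = (\<Sum>i<m. f i * A $$ (i,i))"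
proof -
  have "transpose_mat (mat_diag m f) = mat_diag m f"
    by (rule eq_matI) (auto simp: mat_diag_def)
  then show ?thesis
    using A by (simp add: frob_inner_def mtrace_def mat_diag_mult_left[OF A])
qed

lemma Nmat_eq_mat_diag: "Nmat r = mat_diag r (\<lambda>j. real (r - j))"
  by (rule eq_matI) (auto simp: Nmat_def mat_diag_def)

lemma orthogonal_mult_transpose_mult:
  fixes Q A B :: "real mat"
  assumes Q: "Q \<in> carrier_mat n n" and QtQ: "transpose_mat Q * Q = 1\<^sub>m n"
    and A: "A \<in> carrier_mat n k" and B: "B \<in> carrier_mat n l"
  shows "transpose_mat (Q * A) * (Q * B) = transpose_mat A * B"
proof -
  have "transpose_mat (Q * A) * (Q * B) = transpose_mat A * ((transpose_mat Q * Q) * B)"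
    using Q A B by (simp add: transpose_mult[OF Q A] assoc_mult_mat[of _ k n _ n _ l])
  then show ?thesis using B by (simp add: QtQ)
qed

lemma frob_inner_orthogonal:
  assumes "Q \<in> carrier_mat n n" and "transpose_mat Q * Q = 1\<^sub>m n"
    and "U \<in> carrier_mat n r" and "V \<in> carrier_mat n r"
  shows "frob_inner (Q * U) (Q * V) = frob_inner U V"
  using orthogonal_mult_transpose_mult[OF assms] by (simp add: frob_inner_def)

lemma frob_inner_conj:
  fixes A Q Y :: "real mat"
  assumes A: "A \<in> carrier_mat n n" and Q: "Q \<in> carrier_mat n n" and Y: "Y \<in> carrier_mat n n"
  shows "frob_inner A (Q * Y * transpose_mat Q) = frob_inner (transpose_mat Q * A * Q) Y"
proof -
  have At: "transpose_mat A \<in> carrier_mat n n" and Qt: "transpose_mat Q \<in> carrier_mat n n"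
    using A Q by auto
  have AtQ: "transpose_mat A * Q \<in> carrier_mat n n" and QY: "Q * Y \<in> carrier_mat n n"
    and YQt: "Y * transpose_mat Q \<in> carrier_mat n n" and QtAt: "transpose_mat Q * transpose_mat A \<in> carrier_mat n n"
    using A Q Y by auto
  have QtAQ: "transpose_mat (transpose_mat Q * A * Q) = transpose_mat Q * transpose_mat A * Q"
    using A Q by (simp add: transpose_mult[of _ n n _ n])
  have "frob_inner A (Q * Y * transpose_mat Q) = mtrace ((transpose_mat A * Q * Y) * transpose_mat Q)"
    unfolding frob_inner_def
    by (simp only: assoc_mult_mat[OF Q Y Qt] assoc_mult_mat[OF AtQ Y Qt] assoc_mult_mat[OF At Q YQt])
  also have "\<dots> = mtrace (transpose_mat Q * (transpose_mat A * Q * Y))"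
    using A Q Y by (intro mtrace_mult_comm[of _ n n]) auto
  also have "\<dots> = frob_inner (transpose_mat Q * A * Q) Y"
    unfolding frob_inner_def QtAQ
    by (simp only: assoc_mult_mat[OF At Q Y] assoc_mult_mat[OF QtAt Q Y] assoc_mult_mat[OF Qt At QY])
  finally show ?thesis .
qed

lemma hess_g_orthogonal:
  fixes Q M X U :: "real mat"
  assumes Q: "Q \<in> carrier_mat n n" and QtQ: "transpose_mat Q * Q = 1\<^sub>m n"
    and M: "M \<in> carrier_mat n n" and X: "X \<in> carrier_mat n r" and U: "U \<in> carrier_mat n r"
  shows "hess_g M r (Q * X) (Q * U) = hess_g (transpose_mat Q * M * Q) r X U"
proof -
  have N: "Nmat r \<in> carrier_mat r r" by (simp add: Nmat_def)
  have Qt: "transpose_mat Q \<in> carrier_mat n n" and Xt: "transpose_mat X \<in> carrier_mat r n"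
    and Ut: "transpose_mat U \<in> carrier_mat r n"
    using Q X U by auto
  have XtQt: "transpose_mat X * transpose_mat Q \<in> carrier_mat r n" and QX: "Q * X \<in> carrier_mat n r"
    and MQX: "M * (Q * X) \<in> carrier_mat n r" and QtM: "transpose_mat Q * M \<in> carrier_mat n n"
    and QtMQ: "transpose_mat Q * M * Q \<in> carrier_mat n n"
    and UN: "U * Nmat r \<in> carrier_mat n r" and UNUt: "U * Nmat r * transpose_mat U \<in> carrier_mat n n"
    and UtQt: "transpose_mat U * transpose_mat Q \<in> carrier_mat r n"
    using Q M X U N by auto
  have "transpose_mat (Q * X) * M * (Q * X) = transpose_mat X * (transpose_mat Q * M * Q) * X"
    unfolding transpose_mult[OF Q X]
    by (simp only: assoc_mult_mat[OF XtQt M QX] assoc_mult_mat[OF Xt Qt MQX]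
        assoc_mult_mat[OF Xt QtMQ X] assoc_mult_mat[OF QtM Q X] assoc_mult_mat[OF Qt M QX])
  moreover have "Q * U * Nmat r * transpose_mat (Q * U) = Q * (U * Nmat r * transpose_mat U) * transpose_mat Q"
    unfolding transpose_mult[OF Q U]
    by (simp only: assoc_mult_mat[OF Q U N] assoc_mult_mat[OF Q UN UtQt]
        assoc_mult_mat[OF Q UNUt Qt] assoc_mult_mat[OF UN Ut Qt])
  moreover have "frob_inner M (Q * (U * Nmat r * transpose_mat U) * transpose_mat Q)
      = frob_inner (transpose_mat Q * M * Q) (U * Nmat r * transpose_mat U)"
    using M Q UNUt by (rule frob_inner_conj)
  ultimately show ?thesis
    by (simp add: hess_g_def orthogonal_mult_transpose_mult[OF Q QtQ U U])
qed

lemma tangent_St_orthogonal: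
  assumes Q: "Q \<in> carrier_mat n n" and QtQ: "transpose_mat Q * Q = 1\<^sub>m n"
    and X: "X \<in> carrier_mat n r" and U: "U \<in> carrier_mat n r"
  shows "Q * U \<in> tangent_St n r (Q * X) \<longleftrightarrow> U \<in> tangent_St n r X"
  using Q U by (simp add: tangent_St_def orthogonal_mult_transpose_mult[OF Q QtQ X U]
      orthogonal_mult_transpose_mult[OF Q QtQ U X])

lemma lambda_min_hess_orthogonal:
  assumes Q: "Q \<in> carrier_mat n n" and QtQ: "transpose_mat Q * Q = 1\<^sub>m n"
    and M: "M \<in> carrier_mat n n" and X: "X \<in> carrier_mat n r"
  shows "lambda_min_hess M n r (Q * X) = lambda_min_hess (transpose_mat Q * M * Q) n r X"
proof -
  have QQt: "Q * transpose_mat Q = 1\<^sub>m n"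
    using Q by (intro mat_mult_left_right_inverse[OF _ Q QtQ]) simp
  have transfer: "hess_g M r (Q * X) (Q * V) = hess_g (transpose_mat Q * M * Q) r X V"
      "Q * V \<in> tangent_St n r (Q * X) \<longleftrightarrow> V \<in> tangent_St n r X"
      "frob_inner (Q * V) (Q * V) = frob_inner V V"
    if Vc: "V \<in> carrier_mat n r" for V
    using hess_g_orthogonal[OF Q QtQ M X Vc] tangent_St_orthogonal[OF Q QtQ X Vc]
      frob_inner_orthogonal[OF Q QtQ Vc Vc] by blast+
  have "{hess_g M r (Q * X) U | U. U \<in> tangent_St n r (Q * X) \<and> frob_inner U U = 1}
      = {hess_g (transpose_mat Q * M * Q) r X V | V. V \<in> tangent_St n r X \<and> frob_inner V V = 1}"
  proof (intro equalityI subsetI)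
    fix z assume "z \<in> {hess_g M r (Q * X) U | U. U \<in> tangent_St n r (Q * X) \<and> frob_inner U U = 1}"
    then obtain U where U: "z = hess_g M r (Q * X) U" "U \<in> tangent_St n r (Q * X)" "frob_inner U U = 1"
      by blast
    then have Uc: "U \<in> carrier_mat n r" by (simp add: tangent_St_def)
    define V where "V = transpose_mat Q * U"
    have Vc: "V \<in> carrier_mat n r" using Q Uc by (simp add: V_def)
    have "Q * V = (Q * transpose_mat Q) * U"
      using Q Uc by (simp add: V_def assoc_mult_mat[of _ n n _ n _ r])
    then have "U = Q * V" using Uc by (simp add: QQt)
    then show "z \<in> {hess_g (transpose_mat Q * M * Q) r X V | V. V \<in> tangent_St n r X \<and> frob_inner V V = 1}"
      using U transfer[OF Vc] by (intro CollectI exI[of _ V]) simp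
  next
    fix z assume "z \<in> {hess_g (transpose_mat Q * M * Q) r X V | V. V \<in> tangent_St n r X \<and> frob_inner V V = 1}"
    then obtain V where V: "z = hess_g (transpose_mat Q * M * Q) r X V" "V \<in> tangent_St n r X"
        "frob_inner V V = 1"
      by blast
    then have Vc: "V \<in> carrier_mat n r" by (simp add: tangent_St_def)
    then show "z \<in> {hess_g M r (Q * X) U | U. U \<in> tangent_St n r (Q * X) \<and> frob_inner U U = 1}"
      using V transfer[OF Vc] by (intro CollectI exI[of _ "Q * V"]) simp
  qed
  then show ?thesis by (simp add: lambda_min_hess_def)
qed

lemma lambda_min_hess_le:
  assumes "U \<in> tangent_St n r X" and "frob_inner U U = 1"
    and "bdd_below {hess_g M r X U | U. U \<in> tangent_St n r X \<and> frob_inner U U = 1}"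
  shows "lambda_min_hess M n r X \<le> hess_g M r X U"
  unfolding lambda_min_hess_def using assms by (intro cInf_lower) auto

lemma lambda_min_hess_ge:
  assumes "U \<in> tangent_St n r X" and "frob_inner U U = 1"
    and "\<And>U. U \<in> tangent_St n r X \<Longrightarrow> frob_inner U U = 1 \<Longrightarrow> c \<le> hess_g M r X U"
  shows "c \<le> lambda_min_hess M n r X"
  unfolding lambda_min_hess_def using assms by (intro cInf_greatest) auto

definition eigvec_mat :: "nat \<Rightarrow> (nat \<Rightarrow> real vec) \<Rightarrow> real mat" where
  "eigvec_mat n x = mat n n (\<lambda>(a,k). x k $ a)"

definition select_mat :: "nat \<Rightarrow> nat \<Rightarrow> (nat \<Rightarrow> nat) \<Rightarrow> real mat" where
  "select_mat n r idx = mat n r (\<lambda>(k,b). if k = idx b then 1 else 0)"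

lemma eigvec_mat_dims[simp]: "dim_row (eigvec_mat n x) = n" "dim_col (eigvec_mat n x) = n"
  by (simp_all add: eigvec_mat_def)

lemma select_mat_dims[simp]: "dim_row (select_mat n r idx) = n" "dim_col (select_mat n r idx) = r"
  by (simp_all add: select_mat_def)

lemma eigvec_mat_carrier[simp]: "eigvec_mat n x \<in> carrier_mat n n"
  by (simp add: carrier_matI)

lemma select_mat_carrier[simp]: "select_mat n r idx \<in> carrier_mat n r"
  by (simp add: carrier_matI)

lemma col_eigvec_mat:
  "k < n \<Longrightarrow> x k \<in> carrier_vec n \<Longrightarrow> col (eigvec_mat n x) k = x k"
  by (intro eq_vecI) (auto simp: eigvec_mat_def)

lemma eigvec_mat_orthogonal:
  assumes "\<And>i. i < n \<Longrightarrow> x i \<in> carrier_vec n"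
    and "\<And>i j. i < n \<Longrightarrow> j < n \<Longrightarrow> x i \<bullet> x j = (if i = j then 1 else 0)"
  shows "transpose_mat (eigvec_mat n x) * eigvec_mat n x = 1\<^sub>m n"
  by (rule eq_matI) (auto simp: col_eigvec_mat assms)

lemma eigvec_mat_diagonalizes:
  assumes M: "M \<in> carrier_mat n n"
    and x_carrier: "\<And>i. i < n \<Longrightarrow> x i \<in> carrier_vec n"
    and x_eig: "\<And>i. i < n \<Longrightarrow> M *\<^sub>v x i = lam i \<cdot>\<^sub>v x i"
    and x_orth: "\<And>i j. i < n \<Longrightarrow> j < n \<Longrightarrow> x i \<bullet> x j = (if i = j then 1 else 0)"
  shows "transpose_mat (eigvec_mat n x) * M * eigvec_mat n x = mat_diag n lam"
proof -
  let ?Q = "eigvec_mat n x"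
  have MQ: "M * ?Q = ?Q * mat_diag n lam"
  proof (rule eq_matI)
    fix i j assume "i < dim_row (?Q * mat_diag n lam)" "j < dim_col (?Q * mat_diag n lam)"
    then have i: "i < n" and j: "j < n" by (auto simp: mat_diag_def)
    have "(M * ?Q) $$ (i,j) = (M *\<^sub>v x j) $ i"
      using i j M x_carrier by (simp add: col_eigvec_mat)
    also have "\<dots> = x j $ i * lam j"
      using i x_eig[OF j] x_carrier[OF j] by simp
    also have "\<dots> = (?Q * mat_diag n lam) $$ (i,j)"
      unfolding mat_diag_mult_right[OF eigvec_mat_carrier] using i j by (simp add: eigvec_mat_def)
    finally show "(M * ?Q) $$ (i,j) = (?Q * mat_diag n lam) $$ (i,j)" .
  qed (use M in \<open>auto simp: mat_diag_def\<close>)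
  have "transpose_mat ?Q * M * ?Q = (transpose_mat ?Q * ?Q) * mat_diag n lam"
    using M by (simp add: MQ assoc_mult_mat[of _ n n _ n _ n])
  then show ?thesis by (simp add: eigvec_mat_orthogonal x_carrier x_orth left_mult_one_mat[OF mat_diag_dim])
qed

lemma X_Omega_eq_mult_select_mat:
  assumes "\<And>k. k < r \<Longrightarrow> idx k < n"
  shows "X_Omega n r x idx = eigvec_mat n x * select_mat n r idx"
  by (rule eq_matI)
    (auto simp: X_Omega_def eigvec_mat_def select_mat_def scalar_prod_def atLeast0LessThan
      assms if_distrib cong: if_cong)

lemma sum_delta_mult_left:
  "finite S \<Longrightarrow> (\<Sum>k\<in>S. (if k = a then 1 else 0) * f k) = (if a \<in> S then f a else (0 :: 'a :: semiring_1))"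
  by (simp add: if_distrib[of "\<lambda>c. c * _"] cong: if_cong)

lemma sum_delta_mult_right:
  "finite S \<Longrightarrow> (\<Sum>k\<in>S. f k * (if k = a then 1 else 0)) = (if a \<in> S then f a else (0 :: 'a :: semiring_1))"
  by (simp add: if_distrib[of "\<lambda>c. _ * c"] cong: if_cong)

lemma transpose_select_mat_mult:
  assumes idx: "\<And>a. a < r \<Longrightarrow> idx a < n" and A: "A \<in> carrier_mat n m"
  shows "transpose_mat (select_mat n r idx) * A = mat r m (\<lambda>(a,b). A $$ (idx a, b))"
  by (rule eq_matI)
    (use A idx in \<open>auto simp: select_mat_def scalar_prod_def atLeast0LessThan sum_delta_mult_left\<close>)

lemma mult_select_mat:
  assumes idx: "\<And>b. b < r \<Longrightarrow> idx b < n" and A: "A \<in> carrier_mat m n"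
  shows "A * select_mat n r idx = mat m r (\<lambda>(i,b). A $$ (i, idx b))"
  by (rule eq_matI)
    (use A idx in \<open>auto simp: select_mat_def scalar_prod_def atLeast0LessThan sum_delta_mult_right\<close>)

lemma select_mat_diag_select_mat:
  assumes idx: "\<And>b. b < r \<Longrightarrow> idx b < n" and inj: "inj_on idx {..<r}"
  shows "transpose_mat (select_mat n r idx) * mat_diag n lam * select_mat n r idx
    = mat_diag r (\<lambda>b. lam (idx b))"
proof -
  have "transpose_mat (select_mat n r idx) * mat_diag n lam = mat r n (\<lambda>(a,k). mat_diag n lam $$ (idx a, k))"
    by (rule transpose_select_mat_mult[OF idx mat_diag_dim])
  moreover have "mat r n (\<lambda>(a,k). mat_diag n lam $$ (idx a, k)) * select_mat n r idx
      = mat r r (\<lambda>(a,b). mat_diag n lam $$ (idx a, idx b))"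
    by (subst mult_select_mat[OF idx]) (auto intro!: eq_matI simp: idx)
  moreover have "idx a = idx b \<longleftrightarrow> a = b" if "a < r" "b < r" for a b
    using inj that by (auto simp: inj_on_def)
  ultimately show ?thesis
    by (auto simp: idx mat_diag_def)
qed

lemma tangent_St_select_mat:
  assumes idx: "\<And>b. b < r \<Longrightarrow> idx b < n"
  shows "V \<in> tangent_St n r (select_mat n r idx) \<longleftrightarrow>
    V \<in> carrier_mat n r \<and> (\<forall>a<r. \<forall>b<r. V $$ (idx a, b) + V $$ (idx b, a) = 0)"
proof (cases "V \<in> carrier_mat n r")
  case True
  have "transpose_mat (select_mat n r idx) * V = mat r r (\<lambda>(a,b). V $$ (idx a, b))"
    by (rule transpose_select_mat_mult[OF idx True])
  moreover have "transpose_mat V * select_mat n r idx = mat r r (\<lambda>(a,b). V $$ (idx b, a))"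
    using True by (subst mult_select_mat[OF idx]) (auto intro!: eq_matI simp: idx)
  ultimately have "transpose_mat (select_mat n r idx) * V + transpose_mat V * select_mat n r idx
      = mat r r (\<lambda>(a,b). V $$ (idx a, b) + V $$ (idx b, a))"
    by auto
  then show ?thesis
    using True by (auto simp: tangent_St_def mat_eq_iff)
qed (simp add: tangent_St_def)

definition hess_weight :: "nat \<Rightarrow> (nat \<Rightarrow> real) \<Rightarrow> (nat \<Rightarrow> nat) \<Rightarrow> nat \<Rightarrow> nat \<Rightarrow> real" where
  "hess_weight r lam idx k b = real (r - b) * (lam (idx b) - lam k)"

lemma hess_g_diag_select:
  assumes idx: "\<And>b. b < r \<Longrightarrow> idx b < n" and inj: "inj_on idx {..<r}"
    and V: "V \<in> carrier_mat n r"
  shows "hess_g (mat_diag n lam) r (select_mat n r idx) V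
    = (\<Sum>k<n. \<Sum>b<r. hess_weight r lam idx k b * (V $$ (k,b))\<^sup>2)"
proof -
  let ?N = "mat_diag r (\<lambda>j. real (r - j))"
  have VtVN: "transpose_mat V * V * ?N = mat r r (\<lambda>(a,b). (transpose_mat V * V) $$ (a,b) * real (r - b))"
    using V by (intro mat_diag_mult_right) auto
  have VNVt: "V * ?N * transpose_mat V
      = mat n r (\<lambda>(i,b). V $$ (i,b) * real (r - b)) * transpose_mat V"
    using V by (simp add: mat_diag_mult_right[OF V])
  have "frob_inner (mat_diag r (\<lambda>b. lam (idx b))) (transpose_mat V * V * ?N)
      = (\<Sum>b<r. lam (idx b) * ((\<Sum>k<n. (V $$ (k,b))\<^sup>2) * real (r - b)))"
    using V by (simp add: frob_inner_mat_diag VtVN scalar_prod_def atLeast0LessThan power2_eq_square)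
  also have "\<dots> = (\<Sum>k<n. \<Sum>b<r. real (r - b) * lam (idx b) * (V $$ (k,b))\<^sup>2)"
    by (subst sum.swap) (simp add: sum_distrib_left sum_distrib_right mult_ac)
  finally have top: "frob_inner (mat_diag r (\<lambda>b. lam (idx b))) (transpose_mat V * V * ?N)
      = (\<Sum>k<n. \<Sum>b<r. real (r - b) * lam (idx b) * (V $$ (k,b))\<^sup>2)" .
  have VN: "V * ?N \<in> carrier_mat n r"
    by (rule mult_carrier_mat[OF V mat_diag_dim])
  have VNVt_carrier: "V * ?N * transpose_mat V \<in> carrier_mat n n"
    using V by (intro mult_carrier_mat[OF VN]) simp
  have "frob_inner (mat_diag n lam) (V * ?N * transpose_mat V)
      = (\<Sum>k<n. lam k * (V * ?N * transpose_mat V) $$ (k,k))"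
    by (rule frob_inner_mat_diag[OF VNVt_carrier])
  also have "\<dots> = (\<Sum>k<n. lam k * (\<Sum>b<r. V $$ (k,b) * real (r - b) * V $$ (k,b)))"
    using V by (simp add: VNVt scalar_prod_def atLeast0LessThan)
  also have "\<dots> = (\<Sum>k<n. \<Sum>b<r. real (r - b) * lam k * (V $$ (k,b))\<^sup>2)"
    by (simp add: sum_distrib_left power2_eq_square mult_ac)
  finally have full: "frob_inner (mat_diag n lam) (V * ?N * transpose_mat V)
      = (\<Sum>k<n. \<Sum>b<r. real (r - b) * lam k * (V $$ (k,b))\<^sup>2)" .
  have PDP: "transpose_mat (select_mat n r idx) * mat_diag n lam * select_mat n r idx
      = mat_diag r (\<lambda>b. lam (idx b))"
    by (rule select_mat_diag_select_mat[OF idx inj])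
  show ?thesis
    unfolding hess_g_def PDP Nmat_eq_mat_diag top full
    by (simp add: hess_weight_def sum_subtractf[symmetric] algebra_simps)
qed

lemma double_sum_weighted_sq_ge:
  fixes w v :: "'a \<Rightarrow> 'b \<Rightarrow> real"
  assumes A: "finite A" and B: "finite B"
  shows "- (\<Sum>k\<in>A. \<Sum>b\<in>B. \<bar>w k b\<bar>) * (\<Sum>k\<in>A. \<Sum>b\<in>B. (v k b)\<^sup>2)
    \<le> (\<Sum>k\<in>A. \<Sum>b\<in>B. w k b * (v k b)\<^sup>2)"
proof -
  let ?C = "\<Sum>k\<in>A. \<Sum>b\<in>B. \<bar>w k b\<bar>"
  have "\<bar>w k b\<bar> \<le> ?C" if "k \<in> A" "b \<in> B" for k b
  proof -
    have "\<bar>w k b\<bar> \<le> (\<Sum>b\<in>B. \<bar>w k b\<bar>)" using B that by (intro member_le_sum) auto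
    also have "\<dots> \<le> ?C" using A that by (intro member_le_sum) (auto intro: sum_nonneg)
    finally show ?thesis .
  qed
  then have "- ?C * (v k b)\<^sup>2 \<le> w k b * (v k b)\<^sup>2" if "k \<in> A" "b \<in> B" for k b
    using that by (intro mult_right_mono) (fastforce simp: abs_le_iff)+
  then have "(\<Sum>k\<in>A. \<Sum>b\<in>B. - ?C * (v k b)\<^sup>2) \<le> (\<Sum>k\<in>A. \<Sum>b\<in>B. w k b * (v k b)\<^sup>2)"
    by (intro sum_mono) auto
  then show ?thesis
    by (simp add: sum_distrib_left)
qed

lemma sum_sum_delta:
  fixes h :: "nat \<Rightarrow> nat \<Rightarrow> 'a :: comm_monoid_add"
  assumes "p < n" and "q < r"
  shows "(\<Sum>k<n. \<Sum>b<r. if k = p \<and> b = q then h k b else 0) = h p q"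
proof -
  have "(\<Sum>k<n. \<Sum>b<r. if k = p \<and> b = q then h k b else 0)
      = (\<Sum>k<n. if k = p then (\<Sum>b<r. if b = q then h k b else 0) else 0)"
    by (intro sum.cong refl) auto
  then show ?thesis using assms by simp
qed

definition entry_mat :: "nat \<Rightarrow> nat \<Rightarrow> nat \<Rightarrow> nat \<Rightarrow> real \<Rightarrow> real mat" where
  "entry_mat n r p q c = mat n r (\<lambda>(k,b). if k = p \<and> b = q then c else 0)"

lemma entry_mat_carrier[simp]: "entry_mat n r p q c \<in> carrier_mat n r"
  by (simp add: entry_mat_def)

lemma weighted_sum_sq_entry_mat:
  assumes "p < n" and "q < r"
  shows "(\<Sum>k<n. \<Sum>b<r. w k b * (entry_mat n r p q c $$ (k,b))\<^sup>2) = w p q * c\<^sup>2"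
proof -
  have "(\<Sum>k<n. \<Sum>b<r. w k b * (entry_mat n r p q c $$ (k,b))\<^sup>2)
      = (\<Sum>k<n. \<Sum>b<r. if k = p \<and> b = q then w k b * c\<^sup>2 else 0)"
    by (intro sum.cong refl) (auto simp: entry_mat_def)
  then show ?thesis using sum_sum_delta[OF assms] by simp
qed

lemma weighted_sum_sq_entry_mat_pair:
  assumes "p < n" "q < r" "p' < n" "q' < r" and "(p, q) \<noteq> (p', q')"
  shows "(\<Sum>k<n. \<Sum>b<r. w k b * ((entry_mat n r p q c + entry_mat n r p' q' c') $$ (k,b))\<^sup>2)
    = w p q * c\<^sup>2 + w p' q' * c'\<^sup>2"
proof -
  have "(\<Sum>k<n. \<Sum>b<r. w k b * ((entry_mat n r p q c + entry_mat n r p' q' c') $$ (k,b))\<^sup>2)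
      = (\<Sum>k<n. \<Sum>b<r. w k b * (entry_mat n r p q c $$ (k,b))\<^sup>2)
        + (\<Sum>k<n. \<Sum>b<r. w k b * (entry_mat n r p' q' c' $$ (k,b))\<^sup>2)"
    unfolding sum.distrib[symmetric] using assms(5)
    by (intro sum.cong refl) (auto simp: entry_mat_def algebra_simps power2_eq_square)
  then show ?thesis using assms by (simp add: weighted_sum_sq_entry_mat)
qed

lemma finite_d_min_set:
  fixes lam :: "nat \<Rightarrow> real"
  shows "finite {lam s - lam j | s j. s < j \<and> j \<le> r}"
proof (rule finite_subset)
  show "{lam s - lam j | s j. s < j \<and> j \<le> r} \<subseteq> (\<lambda>(s,j). lam s - lam j) ` ({..r} \<times> {..r})"
    by auto
qed simp

lemma d_min_le: "s < j \<Longrightarrow> j \<le> r \<Longrightarrow> d_min lam r \<le> lam s - lam j"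
  unfolding d_min_def by (intro Min_le finite_d_min_set) auto

lemma inversion_of_non_identity_perm:
  fixes idx :: "nat \<Rightarrow> nat"
  assumes im: "idx ` {..<r} = {..<r}" and nid: "\<not> (\<forall>k<r. idx k = k)"
  shows "\<exists>i j. i < j \<and> j < r \<and> idx j < idx i"
proof (rule ccontr)
  assume no_inversion: "\<not> ?thesis"
  have inj: "inj_on idx {..<r}"
    using im by (simp add: eq_card_imp_inj_on)
  have less: "idx i < idx j" if "i < j" "j < r" for i j
  proof -
    have "idx i \<noteq> idx j" using inj_onD[OF inj, of i j] that by auto
    moreover have "\<not> idx j < idx i" using no_inversion that by blast
    ultimately show ?thesis by simp
  qed
  have grow: "idx k + m \<le> idx (k + m)" if "k + m < r" for k m
    using that
  proof (induction m)
    case (Suc m)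
    then show ?case using less[of "k + m" "k + Suc m"] by simp
  qed simp
  have "idx k = k" if k: "k < r" for k
  proof -
    have "idx 0 + k \<le> idx k" using grow[of 0 k] k by simp
    moreover have "idx k + (r - 1 - k) \<le> idx (r - 1)" using grow[of k "r - 1 - k"] k by simp
    moreover have "idx (r - 1) < r" using im k by auto
    ultimately show ?thesis using k by linarith
  qed
  then show False using nid by blast
qed

locale ordered_spectrum =
  fixes n r :: nat and lam :: "nat \<Rightarrow> real"
  assumes r_pos: "1 \<le> r" and r_lt: "r < n"
    and lam_strict: "\<And>s. s < r \<Longrightarrow> lam s > lam (Suc s)"
    and lam_rest: "\<And>j. r \<le> j \<Longrightarrow> Suc j < n \<Longrightarrow> lam j \<ge> lam (Suc j)"
begin

lemma lam_strict_antimono: "s < j \<Longrightarrow> j \<le> r \<Longrightarrow> lam j < lam s"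
proof (induction j)
  case (Suc j)
  then show ?case using lam_strict[of j] by (cases "s = j") auto
qed simp

lemma lam_le_lam_r: "r \<le> k \<Longrightarrow> k < n \<Longrightarrow> lam k \<le> lam r"
proof (induction k)
  case (Suc k)
  then show ?case using lam_rest[of k] by (cases "r = Suc k") auto
qed simp

lemma d_min_pos: "d_min lam r > 0"
proof -
  have "{lam s - lam j | s j. s < j \<and> j \<le> r} \<noteq> {}" using r_pos by auto
  then have "d_min lam r \<in> {lam s - lam j | s j. s < j \<and> j \<le> r}"
    unfolding d_min_def by (rule Min_in[OF finite_d_min_set])
  then show ?thesis using lam_strict_antimono by auto
qed

lemma d_min_le_weight_pair:
  assumes "k < r" "b < r" "k \<noteq> b"
  shows "d_min lam r \<le> (real k - real b) * (lam b - lam k)"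
proof -
  have "d_min lam r \<le> \<bar>lam b - lam k\<bar>"
    using d_min_le[of b k r lam] d_min_le[of k b r lam] assms by (cases "b < k") auto
  also have "\<dots> \<le> \<bar>real k - real b\<bar> * \<bar>lam b - lam k\<bar>"
  proof -
    have "1 \<le> \<bar>real k - real b\<bar>" using assms by (cases "b < k") auto
    from mult_right_mono[OF this abs_ge_zero] show ?thesis by simp
  qed
  also have "\<dots> = (real k - real b) * (lam b - lam k)"
    using lam_strict_antimono[of b k] lam_strict_antimono[of k b] assms
    by (cases "b < k") (auto simp: abs_mult abs_of_pos abs_of_neg algebra_simps)
  finally show ?thesis .
qed

lemma d_min_le_weight_lower:
  assumes "r \<le> k" "k < n" "b < r"
  shows "d_min lam r \<le> real (r - b) * (lam b - lam k)"
proof -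
  have "d_min lam r \<le> lam b - lam k"
    using d_min_le[of b r r lam] lam_le_lam_r[of k] assms by simp
  also have "\<dots> \<le> real (r - b) * (lam b - lam k)"
    using d_min_pos calculation assms by (intro mult_le_cancel_right1[THEN iffD2]) auto
  finally show ?thesis .
qed

end

locale eigen_selection = ordered_spectrum +
  fixes idx :: "nat \<Rightarrow> nat"
  assumes idx_range: "\<And>k. k < r \<Longrightarrow> idx k < n"
    and idx_inj: "inj_on idx {..<r}"
begin

abbreviation "P \<equiv> select_mat n r idx"
abbreviation "D \<equiv> mat_diag n lam"
abbreviation "d \<equiv> d_min lam r"

lemma hess_g_select: "V \<in> carrier_mat n r \<Longrightarrow>
    hess_g D r P V = (\<Sum>k<n. \<Sum>b<r. hess_weight r lam idx k b * (V $$ (k,b))\<^sup>2)"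
  by (rule hess_g_diag_select[OF idx_range idx_inj])

lemma tangent_St_select:
  "V \<in> tangent_St n r P \<longleftrightarrow>
    V \<in> carrier_mat n r \<and> (\<forall>a<r. \<forall>b<r. V $$ (idx a, b) + V $$ (idx b, a) = 0)"
  by (rule tangent_St_select_mat[OF idx_range])

lemma bdd_below_hess_select:
  "bdd_below {hess_g D r P V | V. V \<in> tangent_St n r P \<and> frob_inner V V = 1}"
proof -
  let ?C = "\<Sum>k<n. \<Sum>b<r. \<bar>hess_weight r lam idx k b\<bar>"
  have "- ?C \<le> hess_g D r P V" if "V \<in> tangent_St n r P" "frob_inner V V = 1" for V
  proof -
    have Vc: "V \<in> carrier_mat n r" using that(1) by (simp add: tangent_St_select)
    have "(\<Sum>k<n. \<Sum>b<r. (V $$ (k,b))\<^sup>2) = 1"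
      using that(2) by (simp add: frob_inner_self_eq_sum[OF Vc])
    then show ?thesis
      using double_sum_weighted_sq_ge[of "{..<n}" "{..<r}" "hess_weight r lam idx" "\<lambda>k b. V $$ (k,b)"]
      by (simp add: hess_g_select[OF Vc])
  qed
  then show ?thesis by (auto simp: bdd_below_def)
qed

lemma lambda_min_hess_select_le:
  assumes "V \<in> tangent_St n r P" "frob_inner V V = 1" "hess_g D r P V \<le> c"
  shows "lambda_min_hess D n r P \<le> c"
  using lambda_min_hess_le[OF assms(1,2) bdd_below_hess_select] assms(3) by linarith

lemma hess_top_block_ge:
  assumes id: "\<forall>k<r. idx k = k" and skew: "\<And>a b. a < r \<Longrightarrow> b < r \<Longrightarrow> w a b = - w b a"
  shows "d / 2 * (\<Sum>k<r. \<Sum>b<r. (w k b)\<^sup>2) \<le> (\<Sum>k<r. \<Sum>b<r. hess_weight r lam idx k b * (w k b)\<^sup>2)"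
proof -
  let ?f = "\<lambda>k b. hess_weight r lam idx k b * (w k b)\<^sup>2"
  have swap: "(\<Sum>k<r. \<Sum>b<r. ?f k b) = (\<Sum>k<r. \<Sum>b<r. ?f b k)"
    by (rule sum.swap)
  have pair: "d * (w k b)\<^sup>2 \<le> ?f k b + ?f b k" if "k < r" "b < r" for k b
  proof (cases "k = b")
    case True
    then show ?thesis using skew[of k k] that by simp
  next
    case False
    have "(w b k)\<^sup>2 = (w k b)\<^sup>2" using skew[of b k] that by simp
    then have "?f k b + ?f b k = (real k - real b) * (lam b - lam k) * (w k b)\<^sup>2"
      using that id by (simp add: hess_weight_def of_nat_diff algebra_simps)
    then show ?thesis
      using d_min_le_weight_pair[OF that False] by (simp add: mult_right_mono)
  qed
  have "d * (\<Sum>k<r. \<Sum>b<r. (w k b)\<^sup>2) \<le> (\<Sum>k<r. \<Sum>b<r. ?f k b + ?f b k)"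
    unfolding sum_distrib_left by (intro sum_mono) (simp add: pair)
  also have "\<dots> = 2 * (\<Sum>k<r. \<Sum>b<r. ?f k b)"
    by (simp add: sum.distrib swap[symmetric])
  finally show ?thesis by simp
qed

lemma hess_lower_block_ge:
  assumes id: "\<forall>k<r. idx k = k"
  shows "d * (\<Sum>k\<in>{r..<n}. \<Sum>b<r. (w k b)\<^sup>2)
    \<le> (\<Sum>k\<in>{r..<n}. \<Sum>b<r. hess_weight r lam idx k b * (w k b)\<^sup>2)"
proof -
  have "d * (w k b)\<^sup>2 \<le> hess_weight r lam idx k b * (w k b)\<^sup>2" if "k \<in> {r..<n}" "b < r" for k b
    using d_min_le_weight_lower[of k b] that id by (intro mult_right_mono) (auto simp: hess_weight_def)
  then show ?thesis
    unfolding sum_distrib_left by (intro sum_mono) simp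
qed

lemma lambda_min_hess_select_identity:
  assumes id: "\<forall>k<r. idx k = k"
  shows "d / 2 \<le> lambda_min_hess D n r P"
proof (rule lambda_min_hess_ge)
  have "entry_mat n r r 0 1 $$ (a, b) = 0" if "a < r" "b < r" for a b
    using that r_lt by (simp add: entry_mat_def)
  then show "entry_mat n r r 0 1 \<in> tangent_St n r P"
    using id by (simp add: tangent_St_select)
  show "frob_inner (entry_mat n r r 0 1) (entry_mat n r r 0 1) = 1"
    using weighted_sum_sq_entry_mat[of r n 0 r "\<lambda>_ _. 1"] r_pos r_lt
    by (simp add: frob_inner_self_eq_sum[OF entry_mat_carrier])
next
  fix V assume V: "V \<in> tangent_St n r P" and norm: "frob_inner V V = 1"
  let ?w = "\<lambda>k b. V $$ (k,b)"
  let ?sq = "\<lambda>K. \<Sum>k\<in>K. \<Sum>b<r. (?w k b)\<^sup>2"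
  let ?hs = "\<lambda>K. \<Sum>k\<in>K. \<Sum>b<r. hess_weight r lam idx k b * (?w k b)\<^sup>2"
  have rows: "{..<n} = {..<r} \<union> {r..<n}" using r_lt by auto
  have Vc: "V \<in> carrier_mat n r"
    and skew: "\<And>a b. a < r \<Longrightarrow> b < r \<Longrightarrow> ?w a b = - ?w b a"
    using V id by (simp_all add: tangent_St_select eq_neg_iff_add_eq_0)
  have split_hess: "hess_g D r P V = ?hs {..<r} + ?hs {r..<n}"
    unfolding hess_g_select[OF Vc] rows by (rule sum.union_disjoint) auto
  have "?sq {..<r} + ?sq {r..<n} = ?sq {..<n}"
    unfolding rows by (rule sum.union_disjoint[symmetric]) auto
  then have split_norm: "?sq {..<r} + ?sq {r..<n} = 1"
    using norm by (simp add: frob_inner_self_eq_sum[OF Vc])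
  have top: "d / 2 * ?sq {..<r} \<le> ?hs {..<r}"
    by (rule hess_top_block_ge[OF id]) (fact skew)
  have lower: "d / 2 * ?sq {r..<n} \<le> ?hs {r..<n}"
  proof -
    have "d / 2 * ?sq {r..<n} \<le> d * ?sq {r..<n}"
      using d_min_pos by (intro mult_right_mono sum_nonneg) auto
    then show ?thesis using hess_lower_block_ge[OF id, of ?w] by linarith
  qed
  have "d / 2 = d / 2 * ?sq {..<r} + d / 2 * ?sq {r..<n}"
    using split_norm by (simp flip: distrib_left)
  then show "d / 2 \<le> hess_g D r P V"
    using split_hess top lower by linarith
qed

lemma lambda_min_hess_select_permuted:
  assumes im: "idx ` {..<r} = {..<r}" and nid: "\<not> (\<forall>k<r. idx k = k)"
  shows "lambda_min_hess D n r P \<le> - (d / 2)"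
proof -
  obtain i j where ij: "i < j" "j < r" "idx j < idx i"
    using inversion_of_non_identity_perm[OF im nid] by blast
  have ranges: "i < r" "idx i < r" "idx i < n" "idx j < n"
    using ij im idx_range r_lt by auto
  have idx_eq: "idx a = idx b \<longleftrightarrow> a = b" if "a < r" "b < r" for a b
    using idx_inj that by (auto simp: inj_on_def)
  define c where "c = sqrt (1/2)"
  have c2: "c\<^sup>2 = 1/2" by (simp add: c_def)
  define V where "V = entry_mat n r (idx i) j c + entry_mat n r (idx j) i (- c)"
  have V_carrier: "V \<in> carrier_mat n r" by (simp add: V_def)
  have distinct: "(idx i, j) \<noteq> (idx j, i)" using ij by auto
  have sums: "(\<Sum>k<n. \<Sum>b<r. w k b * (V $$ (k,b))\<^sup>2) = (w (idx i) j + w (idx j) i) / 2" for w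
    unfolding V_def using weighted_sum_sq_entry_mat_pair[OF ranges(3) ij(2) ranges(4) ranges(1) distinct]
    by (simp add: c2)
  show ?thesis
  proof (rule lambda_min_hess_select_le)
    show "V \<in> tangent_St n r P"
      using ij ranges idx_range r_lt by (auto simp: tangent_St_select V_def entry_mat_def idx_eq)
    show "frob_inner V V = 1"
      using sums[of "\<lambda>_ _. 1"] by (simp add: frob_inner_self_eq_sum[OF V_carrier])
    have "d \<le> lam (idx j) - lam (idx i)" using d_min_le[of "idx j" "idx i" r lam] ij ranges by simp
    moreover have "hess_g D r P V = (real i - real j) * (lam (idx j) - lam (idx i)) / 2"
      using sums[of "hess_weight r lam idx"] ij
      by (simp add: hess_g_select[OF V_carrier] hess_weight_def of_nat_diff algebra_simps)
    moreover have "(real i - real j) * (lam (idx j) - lam (idx i)) \<le> - (lam (idx j) - lam (idx i))"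
      using mult_right_mono[of "real i - real j" "- 1" "lam (idx j) - lam (idx i)"]
        ij d_min_pos calculation(1) by simp
    ultimately show "hess_g D r P V \<le> - (d / 2)" by linarith
  qed
qed

lemma lambda_min_hess_select_not_top:
  assumes im: "idx ` {..<r} \<noteq> {..<r}"
  shows "lambda_min_hess D n r P \<le> - d"
proof -
  have card: "card (idx ` {..<r}) = card {..<r}" using idx_inj by (simp add: card_image)
  have "\<not> idx ` {..<r} \<subseteq> {..<r}"
    using im card_subset_eq[OF finite_lessThan _ card] by blast
  moreover have "\<not> {..<r} \<subseteq> idx ` {..<r}"
    using im card_subset_eq[OF finite_imageI[OF finite_lessThan] _ card[symmetric]] by blast
  ultimately obtain j m where j: "j < r" "r \<le> idx j" and m: "m < r" "m \<notin> idx ` {..<r}"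
    by (auto simp: image_subset_iff not_less)
  let ?V = "entry_mat n r m j 1"
  have mn: "m < n" using m r_lt by simp
  show ?thesis
  proof (rule lambda_min_hess_select_le)
    show "?V \<in> tangent_St n r P"
      using m idx_range by (force simp: tangent_St_select entry_mat_def)
    show "frob_inner ?V ?V = 1"
      using weighted_sum_sq_entry_mat[OF mn j(1), of "\<lambda>_ _. 1"]
      by (simp add: frob_inner_self_eq_sum[OF entry_mat_carrier])
    have "d \<le> lam m - lam (idx j)"
      using d_min_le[of m r r lam] lam_le_lam_r[of "idx j"] idx_range j m by simp
    moreover have "hess_g D r P ?V = real (r - j) * (lam (idx j) - lam m)"
      using weighted_sum_sq_entry_mat[OF mn j(1)] j(1) by (simp add: hess_g_select hess_weight_def of_nat_diff)
    moreover have "real (r - j) * (lam (idx j) - lam m) \<le> lam (idx j) - lam m"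
      using j d_min_pos calculation(1) by (intro mult_le_cancel_right2[THEN iffD2]) auto
    ultimately show "hess_g D r P ?V \<le> - d" by linarith
  qed
qed

end

theorem mainTheorem4:
  fixes n r :: nat and M :: "real mat" and lam :: "nat \<Rightarrow> real"
    and x :: "nat \<Rightarrow> real vec" and idx :: "nat \<Rightarrow> nat"
  assumes r_pos: "1 \<le> r" and r_lt: "r < n"
    and M_carrier: "M \<in> carrier_mat n n" and M_sym: "transpose_mat M = M"
    and x_carrier: "\<And>i. i < n \<Longrightarrow> x i \<in> carrier_vec n"
    and x_eig: "\<And>i. i < n \<Longrightarrow> M *\<^sub>v x i = lam i \<cdot>\<^sub>v x i"
    and x_orth: "\<And>i j. i < n \<Longrightarrow> j < n \<Longrightarrow> x i \<bullet> x j = (if i = j then 1 else 0)"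
    and lam_strict: "\<And>s. s < r \<Longrightarrow> lam s > lam (Suc s)"
    and lam_rest: "\<And>j. r \<le> j \<Longrightarrow> Suc j < n \<Longrightarrow> lam j \<ge> lam (Suc j)"
    and idx_range: "\<And>k. k < r \<Longrightarrow> idx k < n"
    and idx_inj: "inj_on idx {..<r}"
  shows "((\<forall>k<r. idx k = k) \<longrightarrow>
            lambda_min_hess M n r (X_Omega n r x idx) \<ge> d_min lam r / 2)
       \<and> ((idx ` {..<r} = {..<r} \<and> \<not> (\<forall>k<r. idx k = k)) \<longrightarrow>
            lambda_min_hess M n r (X_Omega n r x idx) \<le> - (d_min lam r / 2))
       \<and> (idx ` {..<r} \<noteq> {..<r} \<longrightarrow>
            lambda_min_hess M n r (X_Omega n r x idx) \<le> - d_min lam r)"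
proof -
  interpret eigen_selection n r lam idx
    by unfold_locales (use assms in auto)
  have "lambda_min_hess M n r (X_Omega n r x idx) = lambda_min_hess D n r P"
    using lambda_min_hess_orthogonal[OF eigvec_mat_carrier eigvec_mat_orthogonal M_carrier
        select_mat_carrier] x_carrier x_orth
    by (simp add: X_Omega_eq_mult_select_mat idx_range
        eigvec_mat_diagonalizes[OF M_carrier x_carrier x_eig x_orth])
  then show ?thesis
    using lambda_min_hess_select_identity lambda_min_hess_select_permuted
      lambda_min_hess_select_not_top by auto
qed

end
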